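(* Consider the stochastic learning dynamics described in the context, with $K\ge 2$ arms, Poisson clock rate $\lambda>0$, and parameters $1\ge p_1>p_2\ge\cdots\ge p_K\ge 0$. For any $\delta\in(0,1]$, $\mu\in(0,1]$, $p_1\in(0,1]$ and $p_2\neq 0$, the success event $E^N=\{\lim_{t\to\infty}X^N(t)=(0,N,0,\dots,0)\}$ satisfies \[ \mathbb{P}\{E^N\}\ \ge\ 1-\Big(\frac{p_1}{p_2}\Big)^{-(1-\delta)\frac{\mu p_1}{K e}N}-e^{-\frac{\mu p_1}{K e}\frac{\delta^2}{2}N}, \] where $e\approx 2.7183$ is Euler's number.
   Context: Learning dynamics: there are $K\ge 2$ arms; each pull of arm $k\in\{1,\dots,K\}$ yields an independent Bernoulli$(p_k)$ reward, where $1\ge p_1>p_2\ge\cdots\ge p_K\ge 0$ (arm 1 is the unique best arm); a "null arm" $0$ always yields reward $0$. There are $N$ individuals, each with an independent Poisson clock of rate $\lambda>0$ and a memory variable $M\in\{0,1,\dots,K\}$, initially $M=0$ for every individual. Fix $\mu\in(0,1]$. When an individual's clock ticks, it selects an arm $c\in\{0,\dots,K\}$ as follows: if its $M=0$, then with probability $\mu$ it sets $c$ uniformly at random in $\{1,\dots,K\}$, and with probability $1-\mu$ it picks a peer uniformly at random among all $N$ individuals (including itself) and sets $c$ to that peer's memory value; if its $M\neq 0$, it always picks a peer uniformly at random (including itself) and sets $c$ to that peer's memory value. It then pulls arm $c$, and if the reward is $1$ it sets $M\leftarrow c$ (otherwise $M$ is unchanged). Let $X^N(t)=(X^N_0(t),\dots,X^N_K(t))$,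 where $X^N_k(t)$ is the number of individuals whose memory equals $k$ at time $t$; $X^N(0)=(N,0,\dots,0)$. Equivalently, $X^N$ is the continuous-time Markov chain on nonnegative integer vectors summing to $N$ that, from state $s$, jumps to $s+e^k$ at rate $s_0\lambda(\frac{\mu}{K}+(1-\mu)\frac{s_k}{N})p_k$ for $k=1,\dots,K$, and to $s+e^k-e^{k'}$ at rate $s_{k'}\lambda\frac{s_k}{N}p_k$ for distinct $k,k'\in\{1,\dots,K\}$, where $e^k$ is the $k$-th unit vector (coordinates indexed from $0$). *)

theory Defs
  imports "HOL-Probability.Probability"
begin

text \<open>States: functions s :: nat => nat with s i = number of individuals with memory i,
  supported on {0..K} and summing to N.\<close>

definition states :: "nat \<Rightarrow> nat \<Rightarrow> (nat \<Rightarrow> nat) set" where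
  "states K N = {s. (\<forall>i>K. s i = 0) \<and> (\<Sum>i\<le>K. s i) = N}"

definition mv :: "(nat \<Rightarrow> nat) \<Rightarrow> nat \<Rightarrow> nat \<Rightarrow> (nat \<Rightarrow> nat)" where
  "mv s k' k = (\<lambda>i. if i = k then s i + 1 else if i = k' then s i - 1 else s i)"

definition rate :: "nat \<Rightarrow> nat \<Rightarrow> real \<Rightarrow> real \<Rightarrow> (nat \<Rightarrow> real)
    \<Rightarrow> (nat \<Rightarrow> nat) \<Rightarrow> (nat \<Rightarrow> nat) \<Rightarrow> real" where
  "rate K N lam mu p s s' =
     (\<Sum>k\<in>{1..K}. if s' = mv s 0 k
        then real (s 0) * lam * (mu / real K + (1 - mu) * (real (s k) / real N)) * p k else 0)
   + (\<Sum>k\<in>{1..K}. \<Sum>k'\<in>{1..K} - {k}. if s' = mv s k' k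
        then real (s k') * lam * (real (s k) / real N) * p k else 0)"

definition gen :: "nat \<Rightarrow> nat \<Rightarrow> real \<Rightarrow> real \<Rightarrow> (nat \<Rightarrow> real)
    \<Rightarrow> (nat \<Rightarrow> nat) \<Rightarrow> (nat \<Rightarrow> nat) \<Rightarrow> real" where
  "gen K N lam mu p s s' =
     (if s = s' then - (\<Sum>u\<in>states K N - {s}. rate K N lam mu p s u)
      else rate K N lam mu p s s')"

fun mpow :: "'s set \<Rightarrow> ('s \<Rightarrow> 's \<Rightarrow> real) \<Rightarrow> nat \<Rightarrow> 's \<Rightarrow> 's \<Rightarrow> real" where
  "mpow S Q 0 s s' = (if s = s' then 1 else 0)"
| "mpow S Q (Suc n) s s' = (\<Sum>u\<in>S. mpow S Q n s u * Q u s')"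

definition trans_fun :: "'s set \<Rightarrow> ('s \<Rightarrow> 's \<Rightarrow> real) \<Rightarrow> real \<Rightarrow> 's \<Rightarrow> 's \<Rightarrow> real" where
  "trans_fun S Q t s s' = (\<Sum>n. t ^ n / fact n * mpow S Q n s s')"

definition is_ctmc :: "'a measure \<Rightarrow> 's set \<Rightarrow> ('s \<Rightarrow> 's \<Rightarrow> real) \<Rightarrow> 's
    \<Rightarrow> (real \<Rightarrow> 'a \<Rightarrow> 's) \<Rightarrow> bool" where
  "is_ctmc M S Q x0 X \<longleftrightarrow>
     prob_space M \<and>
     (\<forall>t\<ge>0. \<forall>s. {\<omega>\<in>space M. X t \<omega> = s} \<in> sets M) \<and>
     (\<forall>\<omega>\<in>space M. \<forall>t\<ge>0. X t \<omega> \<in> S) \<and>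
     (\<forall>\<omega>\<in>space M. \<forall>t\<ge>0. \<exists>\<epsilon>>0. \<forall>u. t \<le> u \<and> u < t + \<epsilon> \<longrightarrow> X u \<omega> = X t \<omega>) \<and>
     (\<forall>n (ts :: nat \<Rightarrow> real) (ss :: nat \<Rightarrow> 's).
        ts 0 = 0 \<and> (\<forall>i<n. ts i \<le> ts (Suc i)) \<and> (\<forall>i\<le>n. ss i \<in> S) \<longrightarrow>
        measure M {\<omega>\<in>space M. \<forall>i\<le>n. X (ts i) \<omega> = ss i}
          = (if ss 0 = x0 then 1 else 0) *
            (\<Prod>i<n. trans_fun S Q (ts (Suc i) - ts i) (ss i) (ss (Suc i))))"

definition is_learning_chain :: "nat \<Rightarrow> nat \<Rightarrow> real \<Rightarrow> real \<Rightarrow> (nat \<Rightarrow> real)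
    \<Rightarrow> 'a measure \<Rightarrow> (real \<Rightarrow> 'a \<Rightarrow> (nat \<Rightarrow> nat)) \<Rightarrow> bool" where
  "is_learning_chain K N lam mu p M X \<longleftrightarrow>
     is_ctmc M (states K N) (gen K N lam mu p) (\<lambda>i. if i = 0 then N else 0) X"

definition target :: "nat \<Rightarrow> (nat \<Rightarrow> nat)" where
  "target N = (\<lambda>i. if i = 1 then N else 0)"

end

theory Submission
  imports Defs
begin

(* Let rho = p 2 / p 1 and beta = rho / (rho + (mu/K)(1 - rho)). The function
   G s = rho ^ s 1 * beta ^ s 0 is superharmonic for the generator: every exchange between arm 1
   and a worse arm is a gambler's-ruin step biased towards arm 1, and beta is tuned so that
   individuals leaving the null arm do not increase G either. Hence E G(X t) <= G(X 0) = beta ^ N.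
   On the other hand s 1 <= N has drift bounded below by a positive constant on every state other
   than the target in which s 0 or s 1 is positive, so at some time t such states have probability
   as small as we like. All remaining states have G = 1, which gives
   P(X t = target) >= 1 - beta ^ N - eta; the target is absorbing, and
   beta ^ N <= (p 1 / p 2) powr (-(1 - delta) mu p 1 N / (K e)) by Young's inequality. *)

section \<open>Matrix exponential of a finite generator\<close>

definition gen_apply :: "'s set \<Rightarrow> ('s \<Rightarrow> 's \<Rightarrow> real) \<Rightarrow> ('s \<Rightarrow> real) \<Rightarrow> 's \<Rightarrow> real" where
  "gen_apply S Q g v = (\<Sum>u\<in>S. Q v u * g u)"

lemma abs_mpow_le:
  assumes "finite S" and "1 \<le> L" and col: "\<And>y. y \<in> S \<Longrightarrow> (\<Sum>u\<in>S. \<bar>Q u y\<bar>) \<le> L"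
    and "y \<in> S"
  shows "\<bar>mpow S Q n x y\<bar> \<le> L ^ n"
  using \<open>y \<in> S\<close>
proof (induction n arbitrary: y)
  case 0
  then show ?case by simp
next
  case (Suc n)
  have "\<bar>mpow S Q (Suc n) x y\<bar> \<le> (\<Sum>u\<in>S. \<bar>mpow S Q n x u\<bar> * \<bar>Q u y\<bar>)"
    by (simp add: abs_mult[symmetric] sum_abs)
  also have "\<dots> \<le> (\<Sum>u\<in>S. L ^ n * \<bar>Q u y\<bar>)"
    by (intro sum_mono mult_right_mono Suc.IH) auto
  also have "\<dots> = L ^ n * (\<Sum>u\<in>S. \<bar>Q u y\<bar>)" by (simp add: sum_distrib_left)
  also have "\<dots> \<le> L ^ n * L"
    using col[OF Suc.prems] \<open>1 \<le> L\<close> by (intro mult_left_mono) auto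
  finally show ?case by (simp add: mult.commute)
qed

lemma trans_fun_eq_powser: "trans_fun S Q t x u = (\<Sum>n. (mpow S Q n x u / fact n) * t ^ n)"
  unfolding trans_fun_def by (simp add: mult.commute)

lemma summable_trans_fun_powser:
  assumes "finite S" and "u \<in> S"
  shows "summable (\<lambda>n. (mpow S Q n x u / fact n) * t ^ n)"
proof (rule summable_comparison_test')
  define L where "L = (\<Sum>v\<in>S. \<Sum>w\<in>S. \<bar>Q v w\<bar>) + 1"
  have "1 \<le> L" unfolding L_def by (auto intro!: sum_nonneg)
  have col: "(\<Sum>v\<in>S. \<bar>Q v y\<bar>) \<le> L" if "y \<in> S" for y
  proof -
    have "(\<Sum>v\<in>S. \<bar>Q v y\<bar>) \<le> (\<Sum>v\<in>S. \<Sum>w\<in>S. \<bar>Q v w\<bar>)"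
      by (intro sum_mono member_le_sum) (use that \<open>finite S\<close> in auto)
    then show ?thesis unfolding L_def by simp
  qed
  show "summable (\<lambda>n. inverse (fact n) * (L * \<bar>t\<bar>) ^ n)" by (rule summable_exp)
  fix n
  have "norm ((mpow S Q n x u / fact n) * t ^ n) = \<bar>mpow S Q n x u\<bar> * \<bar>t\<bar> ^ n / fact n"
    by (simp add: abs_mult power_abs)
  also have "\<dots> \<le> L ^ n * \<bar>t\<bar> ^ n / fact n"
    by (intro divide_right_mono mult_right_mono abs_mpow_le[OF assms(1) \<open>1 \<le> L\<close> col assms(2)]) auto
  also have "\<dots> = inverse (fact n) * (L * \<bar>t\<bar>) ^ n" by (simp add: power_mult_distrib field_simps)
  finally show "norm ((mpow S Q n x u / fact n) * t ^ n) \<le> inverse (fact n) * (L * \<bar>t\<bar>) ^ n" .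
qed

lemma trans_fun_has_derivative:
  assumes fin: "finite S" and y: "y \<in> S"
  shows "((\<lambda>t. trans_fun S Q t x y) has_real_derivative (\<Sum>u\<in>S. trans_fun S Q t x u * Q u y)) (at t)"
proof -
  note sm = summable_trans_fun_powser[OF fin]
  define c where "c n = mpow S Q n x y / fact n" for n
  have "((\<lambda>t. \<Sum>n. c n * t ^ n) has_real_derivative (\<Sum>n. diffs c n * t ^ n)) (at t)"
    by (rule termdiffs_strong_converges_everywhere) (use sm[OF y] in \<open>simp add: c_def\<close>)
  moreover have "(\<lambda>t. \<Sum>n. c n * t ^ n) = (\<lambda>t. trans_fun S Q t x y)"
    by (simp add: c_def trans_fun_eq_powser)
  moreover have "(\<Sum>n. diffs c n * t ^ n) = (\<Sum>u\<in>S. trans_fun S Q t x u * Q u y)"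
  proof -
    have "diffs c n * t ^ n = (\<Sum>u\<in>S. (mpow S Q n x u / fact n * t ^ n) * Q u y)" for n
    proof -
      have "diffs c n = mpow S Q (Suc n) x y / fact n"
        unfolding diffs_def c_def by (simp add: fact_Suc del: mpow.simps)
      then show ?thesis
        by (simp add: sum_divide_distrib sum_distrib_right sum_distrib_left mult_ac)
    qed
    then have "(\<Sum>n. diffs c n * t ^ n) = (\<Sum>n. \<Sum>u\<in>S. (mpow S Q n x u / fact n * t ^ n) * Q u y)"
      by simp
    also have "\<dots> = (\<Sum>u\<in>S. \<Sum>n. (mpow S Q n x u / fact n * t ^ n) * Q u y)"
      by (rule suminf_sum) (intro summable_mult2 sm, auto)
    also have "\<dots> = (\<Sum>u\<in>S. trans_fun S Q t x u * Q u y)"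
      proof (intro sum.cong refl)
      fix u assume "u \<in> S"
      show "(\<Sum>n. (mpow S Q n x u / fact n * t ^ n) * Q u y) = trans_fun S Q t x u * Q u y"
        using suminf_mult2[OF sm[OF \<open>u \<in> S\<close>, where t=t], where c="Q u y"]
        by (simp add: trans_fun_eq_powser)
    qed
    finally show ?thesis .
  qed
  ultimately show ?thesis by simp
qed

lemma trans_fun_0: "trans_fun S Q 0 x u = (if x = u then 1 else 0)"
  unfolding trans_fun_eq_powser by (subst powser_zero) simp

lemma trans_fun_absorbing:
  assumes "\<And>u. Q z u = 0"
  shows "trans_fun S Q t z u = (if z = u then 1 else 0)"
proof -
  have mpow_Suc: "mpow S Q (Suc n) z u = 0" for n u
  proof (induction n arbitrary: u)
    case 0
    show ?case using assms by (auto intro!: sum.neutral)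
  next
    case (Suc n)
    then show ?case by simp
  qed
  have "trans_fun S Q t z u = (\<Sum>n\<in>{0}. t ^ n / fact n * mpow S Q n z u)"
    unfolding trans_fun_def
    by (rule suminf_finite) (auto simp del: mpow.simps simp: mpow_Suc gr0_conv_Suc)
  then show ?thesis by simp
qed

lemma expectation_has_derivative:
  assumes "finite S"
  shows "((\<lambda>t. \<Sum>u\<in>S. trans_fun S Q t x u * g u) has_real_derivative
          (\<Sum>v\<in>S. trans_fun S Q t x v * gen_apply S Q g v)) (at t)"
proof -
  have "((\<lambda>t. \<Sum>u\<in>S. trans_fun S Q t x u * g u) has_real_derivative
          (\<Sum>u\<in>S. (\<Sum>v\<in>S. trans_fun S Q t x v * Q v u) * g u)) (at t)"
    by (intro DERIV_sum DERIV_cmult_right trans_fun_has_derivative assms)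
  moreover have "(\<Sum>u\<in>S. (\<Sum>v\<in>S. trans_fun S Q t x v * Q v u) * g u)
      = (\<Sum>v\<in>S. trans_fun S Q t x v * gen_apply S Q g v)"
    unfolding gen_apply_def sum_distrib_right sum_distrib_left mult.assoc by (rule sum.swap)
  ultimately show ?thesis by simp
qed

lemma expectation_mean_value:
  assumes "finite S" "x \<in> S" "0 < t"
  obtains \<xi> where "0 < \<xi>" "\<xi> < t"
    "(\<Sum>u\<in>S. trans_fun S Q t x u * g u) - g x = t * (\<Sum>v\<in>S. trans_fun S Q \<xi> x v * gen_apply S Q g v)"
proof -
  let ?E = "\<lambda>t. \<Sum>u\<in>S. trans_fun S Q t x u * g u"
  have "?E 0 = (\<Sum>u\<in>S. if u = x then g x else 0)"
    by (intro sum.cong) (auto simp: trans_fun_0)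
  also have "\<dots> = g x" using assms by simp
  finally have "?E 0 = g x" .
  moreover have "\<exists>\<xi>. 0 < \<xi> \<and> \<xi> < t \<and> ?E t - ?E 0 = t * (\<Sum>v\<in>S. trans_fun S Q \<xi> x v * gen_apply S Q g v)"
    using MVT2[OF \<open>0 < t\<close> expectation_has_derivative[OF \<open>finite S\<close>]] by simp
  ultimately show ?thesis using that by auto
qed


section \<open>Finite continuous-time Markov chains\<close>

locale finite_ctmc =
  fixes M :: "'a measure" and S :: "'s set" and Q :: "'s \<Rightarrow> 's \<Rightarrow> real" and x0 :: 's
    and X :: "real \<Rightarrow> 'a \<Rightarrow> 's"
  assumes ctmc: "is_ctmc M S Q x0 X" and finite_S: "finite S" and x0_in_S: "x0 \<in> S"
begin

sublocale prob_space M
  using ctmc unfolding is_ctmc_def by blast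

lemma sets_X_eq: "0 \<le> t \<Longrightarrow> {\<omega>\<in>space M. X t \<omega> = s} \<in> sets M"
  using ctmc unfolding is_ctmc_def by blast

lemma X_in_S: "\<omega> \<in> space M \<Longrightarrow> 0 \<le> t \<Longrightarrow> X t \<omega> \<in> S"
  using ctmc unfolding is_ctmc_def by blast

lemma X_right_const: "\<omega> \<in> space M \<Longrightarrow> 0 \<le> t \<Longrightarrow> \<exists>\<epsilon>>0. \<forall>u. t \<le> u \<and> u < t + \<epsilon> \<longrightarrow> X u \<omega> = X t \<omega>"
  using ctmc unfolding is_ctmc_def by blast

lemma prob_finite_dim:
  "ts 0 = 0 \<Longrightarrow> (\<forall>i<n. ts i \<le> ts (Suc i)) \<Longrightarrow> (\<forall>i\<le>n. ss i \<in> S) \<Longrightarrow>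
     prob {\<omega>\<in>space M. \<forall>i\<le>n. X (ts i) \<omega> = ss i}
       = (if ss 0 = x0 then 1 else 0) * (\<Prod>i<n. trans_fun S Q (ts (Suc i) - ts i) (ss i) (ss (Suc i)))"
  using ctmc unfolding is_ctmc_def by blast

lemma sets_X_eq_X_eq: "0 \<le> t \<Longrightarrow> 0 \<le> t' \<Longrightarrow> {\<omega>\<in>space M. X t \<omega> = s \<and> X t' \<omega> = s'} \<in> sets M"
proof -
  assume "0 \<le> t" "0 \<le> t'"
  then have "{\<omega>\<in>space M. X t \<omega> = s} \<inter> {\<omega>\<in>space M. X t' \<omega> = s'} \<in> sets M"
    using sets_X_eq by blast
  moreover have "{\<omega>\<in>space M. X t \<omega> = s \<and> X t' \<omega> = s'}
      = {\<omega>\<in>space M. X t \<omega> = s} \<inter> {\<omega>\<in>space M. X t' \<omega> = s'}" by auto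
  ultimately show ?thesis by simp
qed

lemma prob_X_0: "prob {\<omega>\<in>space M. X 0 \<omega> = x0} = 1"
  using prob_finite_dim[of "\<lambda>_. 0" 0 "\<lambda>_. x0"] x0_in_S by simp

lemma prob_X_0_and_X_eq:
  assumes "0 \<le> t" "u \<in> S"
  shows "prob {\<omega>\<in>space M. X 0 \<omega> = x0 \<and> X t \<omega> = u} = trans_fun S Q t x0 u"
proof -
  have two_times: "(\<forall>i\<le>Suc 0. P i) \<longleftrightarrow> P 0 \<and> P (Suc 0)" for P :: "nat \<Rightarrow> bool"
    by (auto simp: le_Suc_eq)
  show ?thesis
    using prob_finite_dim[of "\<lambda>i. if i = 0 then 0 else t" 1 "\<lambda>i. if i = 0 then x0 else u"]
      assms x0_in_S by (simp add: two_times)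
qed

lemma trans_fun_nonneg: "0 \<le> t \<Longrightarrow> u \<in> S \<Longrightarrow> 0 \<le> trans_fun S Q t x0 u"
  using prob_X_0_and_X_eq[symmetric] by simp

lemma sum_trans_fun: 
  assumes "0 \<le> t"
  shows "(\<Sum>u\<in>S. trans_fun S Q t x0 u) = 1"
proof -
  have "(\<Sum>u\<in>S. trans_fun S Q t x0 u) = (\<Sum>u\<in>S. prob {\<omega>\<in>space M. X 0 \<omega> = x0 \<and> X t \<omega> = u})"
    using prob_X_0_and_X_eq assms by simp
  also have "\<dots> = prob (\<Union>u\<in>S. {\<omega>\<in>space M. X 0 \<omega> = x0 \<and> X t \<omega> = u})"
    using finite_S assms sets_X_eq_X_eq
    by (intro finite_measure_finite_Union[symmetric]) (auto simp: disjoint_family_on_def)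
  also have "(\<Union>u\<in>S. {\<omega>\<in>space M. X 0 \<omega> = x0 \<and> X t \<omega> = u}) = {\<omega>\<in>space M. X 0 \<omega> = x0}"
    using X_in_S assms by auto
  finally show ?thesis using prob_X_0 by simp
qed

lemma expectation_le_of_superharmonic:
  assumes "\<forall>v\<in>S. gen_apply S Q G v \<le> 0" "0 < t"
  shows "(\<Sum>u\<in>S. trans_fun S Q t x0 u * G u) \<le> G x0"
proof -
  obtain \<xi> where "0 < \<xi>"
    and eq: "(\<Sum>u\<in>S. trans_fun S Q t x0 u * G u) - G x0
      = t * (\<Sum>v\<in>S. trans_fun S Q \<xi> x0 v * gen_apply S Q G v)"
    using expectation_mean_value[OF finite_S x0_in_S \<open>0 < t\<close>] by metis
  have "(\<Sum>v\<in>S. trans_fun S Q \<xi> x0 v * gen_apply S Q G v) \<le> 0"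
    using assms(1) trans_fun_nonneg \<open>0 < \<xi>\<close> by (intro sum_nonpos mult_nonneg_nonpos) auto
  then have "t * (\<Sum>v\<in>S. trans_fun S Q \<xi> x0 v * gen_apply S Q G v) \<le> 0"
    using \<open>0 < t\<close> by (simp add: mult_nonneg_nonpos)
  then show ?thesis using eq by linarith
qed

text \<open>Over [0, T] the mean of V gains at least \<epsilon> T times the probability of W at some
  intermediate time, but it can gain at most B.\<close>
lemma exists_time_prob_less:
  assumes V: "\<forall>u\<in>S. 0 \<le> V u \<and> V u \<le> B"
    and drift_nonneg: "\<forall>v\<in>S. 0 \<le> gen_apply S Q V v"
    and drift_W: "\<forall>v\<in>S \<inter> W. \<epsilon> \<le> gen_apply S Q V v"
    and "0 < \<epsilon>" "0 < \<eta>"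
  obtains t where "0 < t" "(\<Sum>u\<in>S \<inter> W. trans_fun S Q t x0 u) < \<eta>"
proof -
  have "0 \<le> B" using V x0_in_S by force
  define T where "T = B / (\<epsilon> * \<eta>) + 1"
  have "0 < T" unfolding T_def using \<open>0 \<le> B\<close> \<open>0 < \<epsilon>\<close> \<open>0 < \<eta>\<close> by (simp add: add_nonneg_pos)
  obtain \<xi> where \<xi>: "0 < \<xi>" "\<xi> < T" and eq: "(\<Sum>u\<in>S. trans_fun S Q T x0 u * V u) - V x0
      = T * (\<Sum>v\<in>S. trans_fun S Q \<xi> x0 v * gen_apply S Q V v)"
    using expectation_mean_value[OF finite_S x0_in_S \<open>0 < T\<close>] by metis
  let ?P = "\<lambda>v. trans_fun S Q \<xi> x0 v"
  have "(\<Sum>u\<in>S. trans_fun S Q T x0 u * V u) \<le> (\<Sum>u\<in>S. trans_fun S Q T x0 u * B)"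
    using V trans_fun_nonneg \<open>0 < T\<close> by (intro sum_mono mult_left_mono) auto
  also have "\<dots> = B" using sum_trans_fun[of T] \<open>0 < T\<close> by (simp flip: sum_distrib_right)
  finally have "T * (\<Sum>v\<in>S. ?P v * gen_apply S Q V v) \<le> B"
    using eq V x0_in_S by force
  moreover have "\<epsilon> * (\<Sum>u\<in>S \<inter> W. ?P u) \<le> (\<Sum>v\<in>S. ?P v * gen_apply S Q V v)"
  proof -
    have "\<epsilon> * (\<Sum>u\<in>S \<inter> W. ?P u) = (\<Sum>v\<in>S. ?P v * (if v \<in> W then \<epsilon> else 0))"
      using finite_S by (simp add: sum_distrib_left sum.inter_restrict if_distrib mult.commute cong: if_cong)
    also have "\<dots> \<le> (\<Sum>v\<in>S. ?P v * gen_apply S Q V v)"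
      using drift_nonneg drift_W trans_fun_nonneg \<xi> by (intro sum_mono mult_left_mono) auto
    finally show ?thesis .
  qed
  ultimately have "T * (\<epsilon> * (\<Sum>u\<in>S \<inter> W. ?P u)) \<le> B"
    using \<open>0 < T\<close> by (smt (verit) mult_left_mono)
  then have "(\<Sum>u\<in>S \<inter> W. ?P u) \<le> B / (T * \<epsilon>)"
    using \<open>0 < T\<close> \<open>0 < \<epsilon>\<close> by (simp add: field_simps)
  also have "\<dots> < \<eta>"
  proof -
    have "B < \<eta> * (T * \<epsilon>)"
      using \<open>0 < \<epsilon>\<close> \<open>0 < \<eta>\<close> unfolding T_def by (simp add: field_simps)
    then show ?thesis using \<open>0 < T\<close> \<open>0 < \<epsilon>\<close> by (simp add: pos_divide_less_eq)
  qed
  finally show ?thesis using that \<xi> by blast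
qed

text \<open>Right-continuous paths are determined by their values at rational times; this makes the
  absorption event measurable.\<close>
lemma X_eq_of_rationals_eq:
  assumes "\<omega> \<in> space M" "0 \<le> T" and rat: "\<forall>r\<in>\<rat>. T \<le> r \<longrightarrow> X r \<omega> = z" and "T \<le> t"
  shows "X t \<omega> = z"
proof -
  have "0 \<le> t" using assms(2,4) by linarith
  then obtain \<epsilon> where "0 < \<epsilon>" and const: "\<forall>u. t \<le> u \<and> u < t + \<epsilon> \<longrightarrow> X u \<omega> = X t \<omega>"
    using X_right_const[OF assms(1)] by blast
  obtain r where "r \<in> \<rat>" "t < r" "r < t + \<epsilon>"
    using Rats_dense_in_real[of t "t + \<epsilon>"] \<open>0 < \<epsilon>\<close> by auto
  have "X r \<omega> = X t \<omega>" by (intro const[rule_format]) (use \<open>t < r\<close> \<open>r < t + \<epsilon>\<close> in auto)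
  moreover have "X r \<omega> = z" using rat \<open>r \<in> \<rat>\<close> \<open>t < r\<close> \<open>T \<le> t\<close> by auto
  ultimately show ?thesis by simp
qed

lemma sets_stays_on_rationals:
  assumes "0 \<le> T"
  shows "{\<omega>\<in>space M. \<forall>r\<in>\<rat>. T \<le> r \<longrightarrow> X r \<omega> = z} \<in> sets M"
proof -
  have meas: "{\<omega>\<in>space M. T \<le> r \<longrightarrow> X r \<omega> = z} \<in> sets M" for r
  proof (cases "T \<le> r")
    case True
    then have "{\<omega>\<in>space M. X r \<omega> = z} \<in> sets M" using sets_X_eq assms by simp
    with True show ?thesis by simp
  qed simp
  have "{\<omega>\<in>space M. \<forall>r\<in>\<rat>. T \<le> r \<longrightarrow> X r \<omega> = z} = (\<Inter>r\<in>\<rat>. {\<omega>\<in>space M. T \<le> r \<longrightarrow> X r \<omega> = z})"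
    using Rats_0 by blast
  also have "\<dots> \<in> sets M"
    using meas Rats_0 by (intro sets.countable_INT'[OF countable_rat]) blast+
  finally show ?thesis .
qed

lemma sets_eventually_X_eq: "{\<omega>\<in>space M. \<forall>\<^sub>F t in at_top. X t \<omega> = z} \<in> sets M"
proof -
  let ?stays = "\<lambda>n::nat. {\<omega>\<in>space M. \<forall>r\<in>\<rat>. real n \<le> r \<longrightarrow> X r \<omega> = z}"
  have "{\<omega>\<in>space M. \<forall>\<^sub>F t in at_top. X t \<omega> = z} = (\<Union>n. ?stays n)"
  proof (intro equalityI subsetI)
    fix \<omega> assume "\<omega> \<in> {\<omega>\<in>space M. \<forall>\<^sub>F t in at_top. X t \<omega> = z}"
    then obtain T where "\<omega> \<in> space M" "\<forall>t\<ge>T. X t \<omega> = z"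
      unfolding eventually_at_top_linorder by blast
    moreover obtain n :: nat where "T \<le> real n" using real_arch_simple by blast
    ultimately have "\<omega> \<in> ?stays n" by auto
    then show "\<omega> \<in> (\<Union>n. ?stays n)" by blast
  next
    fix \<omega> assume "\<omega> \<in> (\<Union>n. ?stays n)"
    then obtain n where "\<omega> \<in> ?stays n" by blast
    then have "\<forall>t\<ge>real n. X t \<omega> = z" using X_eq_of_rationals_eq[of \<omega> "real n"] by auto
    with \<open>\<omega> \<in> ?stays n\<close> show "\<omega> \<in> {\<omega>\<in>space M. \<forall>\<^sub>F t in at_top. X t \<omega> = z}"
      unfolding eventually_at_top_linorder by blast
  qed
  moreover have "(\<Union>n. ?stays n) \<in> sets M"
    using sets_stays_on_rationals[OF of_nat_0_le_iff] by (intro sets.countable_nat_UN) blast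
  ultimately show ?thesis by simp
qed

lemma AE_stays_absorbed:
  assumes z: "z \<in> S" "\<And>u. Q z u = 0" and "0 \<le> T" "T \<le> t"
  shows "AE \<omega> in M. X 0 \<omega> = x0 \<and> X T \<omega> = z \<longrightarrow> X t \<omega> = z"
proof -
  define leave where "leave u = {\<omega>\<in>space M. X 0 \<omega> = x0 \<and> X T \<omega> = z \<and> X t \<omega> = u}" for u
  have "leave u \<in> null_sets M" if "u \<in> S - {z}" for u
  proof -
    have three_times: "(\<forall>i\<le>Suc (Suc 0). P i) \<longleftrightarrow> P 0 \<and> P (Suc 0) \<and> P (Suc (Suc 0))"
      for P :: "nat \<Rightarrow> bool"
      by (auto simp: le_Suc_eq)
    have "prob (leave u) = trans_fun S Q T x0 z * trans_fun S Q (t - T) z u"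
      using prob_finite_dim[of "\<lambda>i. if i = 0 then 0 else if i = 1 then T else t" 2
          "\<lambda>i. if i = 0 then x0 else if i = 1 then z else u"] assms that x0_in_S
      by (simp add: leave_def three_times numeral_2_eq_2 less_Suc_eq)
    then have "prob (leave u) = 0" using that by (auto simp: trans_fun_absorbing z)
    moreover have "leave u \<in> sets M"
    proof -
      have "leave u = {\<omega>\<in>space M. X 0 \<omega> = x0 \<and> X T \<omega> = z} \<inter> {\<omega>\<in>space M. X t \<omega> = u}"
        unfolding leave_def by auto
      then show ?thesis using sets_X_eq_X_eq[of 0 T] sets_X_eq[of t] assms by auto
    qed
    ultimately show ?thesis by (simp add: emeasure_eq_measure null_sets_def)
  qed
  then have "AE \<omega> in M. \<forall>u\<in>S - {z}. \<omega> \<notin> leave u"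
    using finite_S by (intro AE_finite_allI) (auto intro: AE_not_in)
  with AE_space have "AE \<omega> in M. \<omega> \<in> space M \<and> (\<forall>u\<in>S - {z}. \<omega> \<notin> leave u)"
    by (rule eventually_conj)
  then show ?thesis
  proof (rule eventually_mono, intro impI)
    fix \<omega> assume \<omega>: "\<omega> \<in> space M \<and> (\<forall>u\<in>S - {z}. \<omega> \<notin> leave u)"
      and start: "X 0 \<omega> = x0 \<and> X T \<omega> = z"
    have "X t \<omega> \<in> S" using X_in_S \<omega> assms by simp
    show "X t \<omega> = z"
    proof (rule ccontr)
      assume "X t \<omega> \<noteq> z"
      then have "\<omega> \<in> leave (X t \<omega>)" using \<omega> start unfolding leave_def by simp
      then show False using \<omega> \<open>X t \<omega> \<in> S\<close> \<open>X t \<omega> \<noteq> z\<close> by blast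
    qed
  qed
qed

lemma prob_eventually_absorbed_ge:
  assumes "z \<in> S" "\<And>u. Q z u = 0" "0 \<le> T"
  shows "trans_fun S Q T x0 z \<le> prob {\<omega>\<in>space M. \<forall>\<^sub>F t in at_top. X t \<omega> = z}"
proof -
  let ?start = "{\<omega>\<in>space M. X 0 \<omega> = x0 \<and> X T \<omega> = z}"
  let ?stays = "{\<omega>\<in>space M. \<forall>r\<in>\<rat>. T \<le> r \<longrightarrow> X r \<omega> = z}"
  have "AE \<omega> in M. \<forall>r\<in>\<rat>. T \<le> r \<longrightarrow> (X 0 \<omega> = x0 \<and> X T \<omega> = z \<longrightarrow> X r \<omega> = z)"
  proof (subst AE_ball_countable[OF countable_rat], intro ballI)
    fix r :: real
    show "AE \<omega> in M. T \<le> r \<longrightarrow> (X 0 \<omega> = x0 \<and> X T \<omega> = z \<longrightarrow> X r \<omega> = z)"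
    proof (cases "T \<le> r")
      case True
      then show ?thesis using AE_stays_absorbed[OF assms True] by simp
    qed simp
  qed
  then have "AE \<omega> in M. \<omega> \<in> ?start \<longrightarrow> \<omega> \<in> ?stays"
    by (rule eventually_mono) auto
  then have "prob ?start \<le> prob ?stays"
    by (rule finite_measure_mono_AE[OF _ sets_stays_on_rationals[OF \<open>0 \<le> T\<close>]])
  also have "\<dots> \<le> prob {\<omega>\<in>space M. \<forall>\<^sub>F t in at_top. X t \<omega> = z}"
  proof (rule finite_measure_mono[OF _ sets_eventually_X_eq], intro subsetI)
    fix \<omega> assume "\<omega> \<in> ?stays"
    then have "\<forall>t\<ge>T. X t \<omega> = z" using X_eq_of_rationals_eq[of \<omega> T] \<open>0 \<le> T\<close> by auto
    with \<open>\<omega> \<in> ?stays\<close> show "\<omega> \<in> {\<omega>\<in>space M. \<forall>\<^sub>F t in at_top. X t \<omega> = z}"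
      unfolding eventually_at_top_linorder by blast
  qed
  finally show ?thesis using prob_X_0_and_X_eq assms by simp
qed

text \<open>At every time t, 1 \<le> P(X t = z) + P(X t \<in> W) + E G(X t).\<close>
lemma prob_eventually_absorbed_ge_superharmonic:
  assumes z: "z \<in> S" "\<And>u. Q z u = 0"
    and G: "\<forall>u\<in>S. 0 \<le> G u" "\<forall>v\<in>S. gen_apply S Q G v \<le> 0" "\<forall>u\<in>S - W - {z}. 1 \<le> G u"
    and V: "\<forall>u\<in>S. 0 \<le> V u \<and> V u \<le> B" "\<forall>v\<in>S. 0 \<le> gen_apply S Q V v"
      "\<forall>v\<in>S \<inter> W. \<epsilon> \<le> gen_apply S Q V v" "0 < \<epsilon>" "0 < \<eta>"
  shows "1 - G x0 - \<eta> \<le> prob {\<omega>\<in>space M. \<forall>\<^sub>F t in at_top. X t \<omega> = z}"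
proof -
  obtain t where "0 < t" and W_small: "(\<Sum>u\<in>S \<inter> W. trans_fun S Q t x0 u) < \<eta>"
    by (rule exists_time_prob_less[OF V])
  let ?P = "\<lambda>u. trans_fun S Q t x0 u"
  have "1 = (\<Sum>u\<in>S. ?P u)" using sum_trans_fun \<open>0 < t\<close> by simp
  also have "\<dots> \<le> (\<Sum>u\<in>S. ?P u * ((if u = z then 1 else 0) + (if u \<in> W then 1 else 0) + G u))"
  proof (intro sum_mono)
    fix u assume "u \<in> S"
    have "1 \<le> (if u = z then 1 else 0) + (if u \<in> W then 1 else 0) + G u"
    proof (cases "u = z \<or> u \<in> W")
      case True
      have "0 \<le> G u" using G(1) \<open>u \<in> S\<close> by blast
      with True show ?thesis by (cases "u = z") simp_all
    next
      case False
      then have "1 \<le> G u" using G(3) \<open>u \<in> S\<close> by blast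
      with False show ?thesis by simp
    qed
    moreover have "0 \<le> ?P u" using trans_fun_nonneg \<open>u \<in> S\<close> \<open>0 < t\<close> by simp
    ultimately have "?P u * 1 \<le> ?P u * ((if u = z then 1 else 0) + (if u \<in> W then 1 else 0) + G u)"
      by (rule mult_left_mono)
    then show "?P u \<le> ?P u * ((if u = z then 1 else 0) + (if u \<in> W then 1 else 0) + G u)"
      by simp
  qed
  also have "\<dots> = ?P z + (\<Sum>u\<in>S \<inter> W. ?P u) + (\<Sum>u\<in>S. ?P u * G u)"
  proof -
    have "(\<Sum>u\<in>S. ?P u * (if u = z then 1 else 0)) = (\<Sum>u\<in>S. if u = z then ?P z else 0)"
      by (intro sum.cong) auto
    also have "\<dots> = ?P z" using finite_S z by simp
    moreover have "(\<Sum>u\<in>S. ?P u * (if u \<in> W then 1 else 0)) = (\<Sum>u\<in>S. if u \<in> W then ?P u else 0)"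
      by (intro sum.cong) auto
    moreover have "\<dots> = (\<Sum>u\<in>S \<inter> W. ?P u)" using finite_S by (simp add: sum.inter_restrict)
    ultimately show ?thesis by (simp add: distrib_left sum.distrib)
  qed
  finally have "1 \<le> ?P z + (\<Sum>u\<in>S \<inter> W. ?P u) + (\<Sum>u\<in>S. ?P u * G u)" .
  moreover have "(\<Sum>u\<in>S. ?P u * G u) \<le> G x0"
    using expectation_le_of_superharmonic G(2) \<open>0 < t\<close> by blast
  moreover have "?P z \<le> prob {\<omega>\<in>space M. \<forall>\<^sub>F t in at_top. X t \<omega> = z}"
    using prob_eventually_absorbed_ge[OF z] \<open>0 < t\<close> by simp
  ultimately show ?thesis using W_small by linarith
qed

end

section \<open>The learning dynamics\<close>

lemma finite_states: "finite (states K N)"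
proof -
  have "states K N \<subseteq> (\<lambda>f i. if i \<le> K then f i else 0) ` ({..K} \<rightarrow>\<^sub>E {..N})"
  proof
    fix s assume s: "s \<in> states K N"
    have le: "s i \<le> N" if "i \<le> K" for i
    proof -
      have "s i \<le> (\<Sum>j\<le>K. s j)" by (rule member_le_sum) (use that in auto)
      then show ?thesis using s unfolding states_def by simp
    qed
    have "s = (\<lambda>i. if i \<le> K then restrict s {..K} i else 0)"
      using s unfolding states_def by (auto simp: fun_eq_iff)
    moreover have "restrict s {..K} \<in> {..K} \<rightarrow>\<^sub>E {..N}" using le by auto
    ultimately show "s \<in> (\<lambda>f i. if i \<le> K then f i else 0) ` ({..K} \<rightarrow>\<^sub>E {..N})" by blast
  qed
  then show ?thesis by (rule finite_subset) (auto intro!: finite_PiE)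
qed

lemma state_le_N:
  assumes "s \<in> states K N" "i \<le> K"
  shows "s i \<le> N"
proof -
  have "s i \<le> (\<Sum>j\<le>K. s j)" by (rule member_le_sum) (use assms(2) in auto)
  then show ?thesis using assms(1) unfolding states_def by simp
qed

lemma states_sum_split:
  assumes "s \<in> states K N" "1 \<le> K"
  shows "real (s 0) + real (s 1) + (\<Sum>k\<in>{2..K}. real (s k)) = real N"
proof -
  have "{..K} = insert 0 (insert 1 {2..K})" using assms(2) by auto
  then have "(\<Sum>i\<le>K. real (s i)) = real (s 0) + real (s 1) + (\<Sum>k\<in>{2..K}. real (s k))" by simp
  moreover have "(\<Sum>i\<le>K. real (s i)) = real N"
    using assms(1) unfolding states_def by (simp flip: of_nat_sum)
  ultimately show ?thesis by simp
qed

lemma states_eq_target: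
  assumes s: "s \<in> states K N" and "1 \<le> K" and "s 0 = 0" and others: "\<forall>k\<in>{2..K}. s k = 0"
  shows "s = target N"
proof -
  have "s 1 = N" using states_sum_split[OF s \<open>1 \<le> K\<close>] \<open>s 0 = 0\<close> others by simp
  moreover have "s i = 0" if "i \<noteq> 1" for i
  proof (cases "i = 0 \<or> K < i")
    case True
    then show ?thesis using \<open>s 0 = 0\<close> s unfolding states_def by auto
  next
    case False
    then show ?thesis using others \<open>i \<noteq> 1\<close> by simp
  qed
  ultimately show ?thesis unfolding target_def by auto
qed

lemma target_in_states: "1 \<le> K \<Longrightarrow> target N \<in> states K N"
  unfolding states_def target_def by simp

lemma mv_neq:
  assumes "k \<noteq> k'"
  shows "mv s k' k \<noteq> s"
proof
  assume "mv s k' k = s"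
  then have "mv s k' k k = s k" by simp
  with assms show False unfolding mv_def by simp
qed

lemma mv_in_states:
  assumes s: "s \<in> states K N" and "k \<le> K" "k' \<le> K" "k \<noteq> k'" "1 \<le> s k'"
  shows "mv s k' k \<in> states K N"
proof -
  have i: "int (mv s k' k i) = int (s i) + (if i = k then 1 else 0) - (if i = k' then 1 else 0)" for i
    using assms(4,5) unfolding mv_def by auto
  have "int (\<Sum>i\<le>K. mv s k' k i) = (\<Sum>i\<le>K. int (s i) + (if i = k then 1 else 0) - (if i = k' then 1 else 0))"
    by (simp add: i)
  also have "\<dots> = (\<Sum>i\<le>K. int (s i))"
    using assms(2,3) by (simp add: sum.distrib sum_subtractf)
  also have "\<dots> = int N" using s unfolding states_def by (simp flip: of_nat_sum)
  finally have "(\<Sum>i\<le>K. mv s k' k i) = N" by linarith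
  moreover have "\<forall>i>K. mv s k' k i = 0" using s assms(2,3) unfolding states_def mv_def by auto
  ultimately show ?thesis unfolding states_def by simp
qed

definition adopt_rate :: "nat \<Rightarrow> nat \<Rightarrow> real \<Rightarrow> real \<Rightarrow> (nat \<Rightarrow> real) \<Rightarrow> (nat \<Rightarrow> nat) \<Rightarrow> nat \<Rightarrow> real"
  where "adopt_rate K N lam mu p s k = real (s 0) * lam * (mu / real K + (1 - mu) * (real (s k) / real N)) * p k"

text \<open>In switch_rate N lam p s k k' an individual leaves arm k' for arm k.\<close>
definition switch_rate :: "nat \<Rightarrow> real \<Rightarrow> (nat \<Rightarrow> real) \<Rightarrow> (nat \<Rightarrow> nat) \<Rightarrow> nat \<Rightarrow> nat \<Rightarrow> real"
  where "switch_rate N lam p s k k' = real (s k') * lam * (real (s k) / real N) * p k"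

definition drift :: "nat \<Rightarrow> nat \<Rightarrow> real \<Rightarrow> real \<Rightarrow> (nat \<Rightarrow> real) \<Rightarrow> ((nat \<Rightarrow> nat) \<Rightarrow> real) \<Rightarrow> (nat \<Rightarrow> nat) \<Rightarrow> real"
  where "drift K N lam mu p g s =
     (\<Sum>k\<in>{1..K}. adopt_rate K N lam mu p s k * (g (mv s 0 k) - g s))
   + (\<Sum>k\<in>{1..K}. \<Sum>k'\<in>{1..K} - {k}. switch_rate N lam p s k k' * (g (mv s k' k) - g s))"

lemma sum_mult_sum_swap:
  fixes f :: "'i \<Rightarrow> 'u \<Rightarrow> 'a::semiring_0"
  shows "(\<Sum>u\<in>T. (\<Sum>k\<in>I. f k u) * h u) = (\<Sum>k\<in>I. \<Sum>u\<in>T. f k u * h u)"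
  by (simp add: sum_distrib_right sum.swap[of _ T I])

lemma gen_apply_eq_drift:
  assumes s: "s \<in> states K N"
  shows "gen_apply (states K N) (gen K N lam mu p) g s = drift K N lam mu p g s"
proof -
  let ?S = "states K N" and ?T = "states K N - {s}"
  let ?r = "rate K N lam mu p s"
  let ?A = "adopt_rate K N lam mu p s" and ?B = "switch_rate N lam p s"
  define h where "h u = g u - g s" for u
  have fin: "finite ?T" by (simp add: finite_states)
  have pick: "(\<Sum>u\<in>?T. (if u = m then c else 0) * h u) = c * h m" if "c \<noteq> 0 \<Longrightarrow> m \<in> ?T" for m c
  proof -
    have "(\<Sum>u\<in>?T. (if u = m then c else 0) * h u) = (\<Sum>u\<in>?T. if u = m then c * h m else 0)"
      by (intro sum.cong) auto
    also have "\<dots> = c * h m" using fin that by (cases "m \<in> ?T") auto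
    finally show ?thesis .
  qed
  have diag: "gen K N lam mu p s s = - (\<Sum>u\<in>?T. ?r u)" by (simp add: gen_def)
  have off_diag: "(\<Sum>u\<in>?T. gen K N lam mu p s u * g u) = (\<Sum>u\<in>?T. ?r u * g u)"
    by (intro sum.cong) (auto simp: gen_def)
  have "gen_apply ?S (gen K N lam mu p) g s
      = gen K N lam mu p s s * g s + (\<Sum>u\<in>?T. gen K N lam mu p s u * g u)"
    using s fin by (simp add: gen_apply_def sum.remove)
  also have "\<dots> = - (\<Sum>u\<in>?T. ?r u) * g s + (\<Sum>u\<in>?T. ?r u * g u)"
    by (simp only: diag off_diag)
  also have "\<dots> = (\<Sum>u\<in>?T. ?r u * h u)"
    by (simp add: h_def right_diff_distrib sum_subtractf sum_distrib_right)
  also have "\<dots> = (\<Sum>k\<in>{1..K}. \<Sum>u\<in>?T. (if u = mv s 0 k then ?A k else 0) * h u)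
      + (\<Sum>k\<in>{1..K}. \<Sum>k'\<in>{1..K} - {k}. \<Sum>u\<in>?T. (if u = mv s k' k then ?B k k' else 0) * h u)"
    unfolding rate_def adopt_rate_def switch_rate_def distrib_right sum.distrib
    by (simp only: sum_mult_sum_swap)
  also have "\<dots> = (\<Sum>k\<in>{1..K}. ?A k * h (mv s 0 k))
      + (\<Sum>k\<in>{1..K}. \<Sum>k'\<in>{1..K} - {k}. ?B k k' * h (mv s k' k))"
  proof (intro arg_cong2[where f="(+)"] sum.cong refl pick)
    fix k assume k: "k \<in> {1..K}" and "?A k \<noteq> 0"
    then have "1 \<le> s 0" unfolding adopt_rate_def by (cases "s 0") auto
    then show "mv s 0 k \<in> ?T" using k s mv_in_states[of s K N k 0] mv_neq[of k 0 s] by auto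
  next
    fix k k' assume k: "k \<in> {1..K}" and k': "k' \<in> {1..K} - {k}" and "?B k k' \<noteq> 0"
    then have "1 \<le> s k'" unfolding switch_rate_def by (cases "s k'") auto
    then show "mv s k' k \<in> ?T" using k k' s mv_in_states[of s K N k k'] mv_neq[of k k' s] by auto
  qed
  finally show ?thesis unfolding drift_def h_def .
qed


lemma sum_atLeast_1_split:
  fixes f :: "nat \<Rightarrow> 'a::comm_monoid_add"
  shows "1 \<le> K \<Longrightarrow> (\<Sum>k\<in>{1..K}. f k) = f 1 + (\<Sum>k\<in>{2..K}. f k)"
  using sum.atLeast_Suc_atMost[of 1 K f] by (simp only: Suc_1)

lemma sum_offdiag_via_1:
  fixes f :: "nat \<Rightarrow> nat \<Rightarrow> real"
  assumes "1 \<le> K" and zero: "\<And>k k'. k \<in> {2..K} \<Longrightarrow> k' \<in> {2..K} \<Longrightarrow> k \<noteq> k' \<Longrightarrow> f k k' = 0"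
  shows "(\<Sum>k\<in>{1..K}. \<Sum>k'\<in>{1..K} - {k}. f k k') = (\<Sum>k\<in>{2..K}. f 1 k + f k 1)"
proof -
  have "(\<Sum>k\<in>{1..K}. \<Sum>k'\<in>{1..K} - {k}. f k k')
      = (\<Sum>k'\<in>{1..K} - {1}. f 1 k') + (\<Sum>k\<in>{2..K}. \<Sum>k'\<in>{1..K} - {k}. f k k')"
    using \<open>1 \<le> K\<close> by (rule sum_atLeast_1_split)
  also have "{1..K} - {1} = {2..K}" by auto
  also have "(\<Sum>k\<in>{2..K}. \<Sum>k'\<in>{1..K} - {k}. f k k') = (\<Sum>k\<in>{2..K}. f k 1)"
  proof (intro sum.cong refl)
    fix k assume k: "k \<in> {2..K}"
    have "{1..K} - {k} = insert 1 ({2..K} - {k})" using k by auto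
    then have "(\<Sum>k'\<in>{1..K} - {k}. f k k') = f k 1 + (\<Sum>k'\<in>{2..K} - {k}. f k k')" by simp
    also have "(\<Sum>k'\<in>{2..K} - {k}. f k k') = 0" using k zero by (intro sum.neutral) auto
    finally show "(\<Sum>k'\<in>{1..K} - {k}. f k k') = f k 1" by simp
  qed
  finally show ?thesis by (simp add: sum.distrib)
qed

definition geom_potential :: "real \<Rightarrow> real \<Rightarrow> (nat \<Rightarrow> nat) \<Rightarrow> real" where
  "geom_potential \<rho> \<beta> s = \<rho> ^ s 1 * \<beta> ^ s 0"

lemma geom_potential_adopt_step:
  assumes "0 < \<rho>" "0 < \<beta>" "k \<in> {1..K}"
  shows "adopt_rate K N lam mu p s k * (geom_potential \<rho> \<beta> (mv s 0 k) - geom_potential \<rho> \<beta> s)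
       = adopt_rate K N lam mu p s k * geom_potential \<rho> \<beta> s
           * (if k = 1 then \<rho> / \<beta> - 1 else 1 / \<beta> - 1)"
proof (cases "s 0")
  case 0
  then show ?thesis by (simp add: adopt_rate_def)
next
  case (Suc n)
  have "k \<noteq> 0" using assms(3) by auto
  then show ?thesis using Suc assms by (cases "k = 1") (simp_all add: geom_potential_def mv_def field_simps)
qed

lemma geom_potential_switch_step:
  assumes "0 < \<rho>" "0 < \<beta>" "k \<in> {1..K}" "k' \<in> {1..K} - {k}"
  shows "switch_rate N lam p s k k' * (geom_potential \<rho> \<beta> (mv s k' k) - geom_potential \<rho> \<beta> s)
       = switch_rate N lam p s k k' * geom_potential \<rho> \<beta> s
           * (if k = 1 then \<rho> - 1 else if k' = 1 then 1 / \<rho> - 1 else 0)"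
proof -
  have k0: "k \<noteq> 0" "k' \<noteq> 0" "k \<noteq> k'" using assms by auto
  consider "k = 1" | "k \<noteq> 1" "k' = 1" "s 1 = 0" | "k \<noteq> 1" "k' = 1" "s 1 \<noteq> 0" | "k \<noteq> 1" "k' \<noteq> 1"
    by blast
  then show ?thesis
  proof cases
    case 1
    then show ?thesis using assms k0 by (simp add: geom_potential_def mv_def field_simps)
  next
    case 2
    then show ?thesis by (simp add: switch_rate_def)
  next
    case 3
    then obtain n where "s 1 = Suc n" using not0_implies_Suc by blast
    then show ?thesis using 3 assms k0 by (simp add: geom_potential_def mv_def field_simps)
  next
    case 4
    then show ?thesis using k0 by (simp add: geom_potential_def mv_def)
  qed
qed

lemma drift_geom_potential:
  assumes "1 \<le> K" "0 < \<rho>" "0 < \<beta>"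
  shows "drift K N lam mu p (geom_potential \<rho> \<beta>) s = geom_potential \<rho> \<beta> s *
     ((adopt_rate K N lam mu p s 1 * (\<rho> / \<beta> - 1) + (\<Sum>k\<in>{2..K}. adopt_rate K N lam mu p s k * (1 / \<beta> - 1)))
      + (\<Sum>k\<in>{2..K}. switch_rate N lam p s 1 k * (\<rho> - 1) + switch_rate N lam p s k 1 * (1 / \<rho> - 1)))"
proof -
  let ?G = "geom_potential \<rho> \<beta>"
  let ?A = "adopt_rate K N lam mu p s" and ?B = "switch_rate N lam p s"
  have "(\<Sum>k\<in>{1..K}. ?A k * (?G (mv s 0 k) - ?G s))
      = (\<Sum>k\<in>{1..K}. ?A k * ?G s * (if k = 1 then \<rho> / \<beta> - 1 else 1 / \<beta> - 1))"
    by (intro sum.cong refl geom_potential_adopt_step assms)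
  also have "\<dots> = ?A 1 * ?G s * (\<rho> / \<beta> - 1) + (\<Sum>k\<in>{2..K}. ?A k * ?G s * (1 / \<beta> - 1))"
    by (subst sum_atLeast_1_split[OF \<open>1 \<le> K\<close>]) simp
  also have "\<dots> = ?G s * (?A 1 * (\<rho> / \<beta> - 1) + (\<Sum>k\<in>{2..K}. ?A k * (1 / \<beta> - 1)))"
    by (simp add: sum_distrib_left algebra_simps)
  finally have adopt: "(\<Sum>k\<in>{1..K}. ?A k * (?G (mv s 0 k) - ?G s))
      = ?G s * (?A 1 * (\<rho> / \<beta> - 1) + (\<Sum>k\<in>{2..K}. ?A k * (1 / \<beta> - 1)))" .
  have "(\<Sum>k\<in>{1..K}. \<Sum>k'\<in>{1..K} - {k}. ?B k k' * (?G (mv s k' k) - ?G s))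
      = (\<Sum>k\<in>{1..K}. \<Sum>k'\<in>{1..K} - {k}.
           ?B k k' * ?G s * (if k = 1 then \<rho> - 1 else if k' = 1 then 1 / \<rho> - 1 else 0))"
    by (intro sum.cong refl geom_potential_switch_step assms) auto
  also have "\<dots> = (\<Sum>k\<in>{2..K}. ?B 1 k * ?G s * (\<rho> - 1) + ?B k 1 * ?G s * (1 / \<rho> - 1))"
    by (subst sum_offdiag_via_1[OF \<open>1 \<le> K\<close>]) auto
  finally have switch: "(\<Sum>k\<in>{1..K}. \<Sum>k'\<in>{1..K} - {k}. ?B k k' * (?G (mv s k' k) - ?G s))
      = ?G s * (\<Sum>k\<in>{2..K}. ?B 1 k * (\<rho> - 1) + ?B k 1 * (1 / \<rho> - 1))"
    by (simp add: sum_distrib_left algebra_simps)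
  show ?thesis unfolding drift_def adopt switch by (simp add: distrib_left)
qed


lemma adopt_part_nonpos:
  assumes K2: "2 \<le> K" and N1: "1 \<le> N" and lam: "0 < lam" and mu: "0 < mu" "mu \<le> 1"
    and p: "0 < p 2" "p 2 < p 1" and pk: "\<forall>k\<in>{2..K}. 0 \<le> p k \<and> p k \<le> p 2"
    and s: "s \<in> states K N"
    and \<rho>: "\<rho> = p 2 / p 1" and m: "m = mu / real K" and \<beta>: "\<beta> = \<rho> / (\<rho> + m * (1 - \<rho>))"
  shows "adopt_rate K N lam mu p s 1 * (\<rho> / \<beta> - 1)
      + (\<Sum>k\<in>{2..K}. adopt_rate K N lam mu p s k * (1 / \<beta> - 1)) \<le> 0"
proof -
  let ?A = "adopt_rate K N lam mu p s"
  have r0: "0 < \<rho>" "\<rho> < 1" using \<rho> p by auto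
  have "0 < m" using m mu K2 by simp
  have "m \<le> 1 / real K" unfolding m using mu K2 by (intro divide_right_mono) auto
  moreover have "1 / real K \<le> 1" using K2 by simp
  ultimately have "m \<le> 1" by linarith
  have den: "0 < \<rho> + m * (1 - \<rho>)" using r0 \<open>0 < m\<close> by (simp add: add_pos_nonneg)
  have "\<rho> / \<beta> = \<rho> + m * (1 - \<rho>)" unfolding \<beta> using r0 den by simp
  then have coef1: "\<rho> / \<beta> - 1 = - ((1 - \<rho>) * (1 - m))" by (simp add: algebra_simps)
  have coef2: "1 / \<beta> - 1 = m * (1 - \<rho>) / \<rho>"
    unfolding \<beta> using r0 den by (simp add: field_simps)
  define c0 where "c0 = real (s 0) * lam"
  have "0 \<le> c0" using lam by (simp add: c0_def)
  have A: "?A k = c0 * (m + (1 - mu) * (real (s k) / real N)) * p k" for k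
    by (simp add: adopt_rate_def c0_def m)
  have "c0 * m * p 1 \<le> ?A 1"
    unfolding A using \<open>0 \<le> c0\<close> p mu N1 by (intro mult_right_mono mult_left_mono) (auto simp: add_increasing2)
  moreover have "\<rho> / \<beta> - 1 \<le> 0" using coef1 r0 \<open>m \<le> 1\<close> by simp
  ultimately have "?A 1 * (\<rho> / \<beta> - 1) \<le> c0 * m * p 1 * (\<rho> / \<beta> - 1)"
    by (rule mult_right_mono_neg)
  also have "\<dots> = - (c0 * m * p 1 * (1 - m) * (1 - \<rho>))" unfolding coef1 by (simp add: algebra_simps)
  finally have first: "?A 1 * (\<rho> / \<beta> - 1) \<le> - (c0 * m * p 1 * (1 - m) * (1 - \<rho>))" .
  have "(\<Sum>k\<in>{2..K}. ?A k) \<le> (\<Sum>k\<in>{2..K}. c0 * (m + (1 - mu) * (real (s k) / real N)) * p 2)"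
    unfolding A using \<open>0 \<le> c0\<close> pk \<open>0 < m\<close> mu
    by (intro sum_mono mult_left_mono) (auto intro!: mult_nonneg_nonneg add_nonneg_nonneg)
  also have "\<dots> = c0 * p 2 * ((real K - 1) * m + (1 - mu) / real N * (\<Sum>k\<in>{2..K}. real (s k)))"
    using K2 by (simp add: sum.distrib sum_distrib_left algebra_simps of_nat_diff flip: sum_divide_distrib)
  also have "\<dots> \<le> c0 * p 2 * ((real K - 1) * m + (1 - mu) / real N * real N)"
    using \<open>0 \<le> c0\<close> p mu N1 states_sum_split[OF s] K2
    by (intro mult_left_mono add_left_mono) auto
  also have "\<dots> = c0 * p 2 * (1 - m)" using N1 K2 m by (simp add: field_simps)
  finally have others: "(\<Sum>k\<in>{2..K}. ?A k) \<le> c0 * p 2 * (1 - m)" .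
  have "(\<Sum>k\<in>{2..K}. ?A k * (1 / \<beta> - 1)) = (\<Sum>k\<in>{2..K}. ?A k) * (m * (1 - \<rho>) / \<rho>)"
    by (simp add: sum_distrib_right sum_divide_distrib coef2)
  also have "\<dots> \<le> c0 * p 2 * (1 - m) * (m * (1 - \<rho>) / \<rho>)"
    using others by (rule mult_right_mono) (use r0 \<open>0 < m\<close> in simp)
  also have "\<dots> = c0 * m * p 1 * (1 - m) * (1 - \<rho>)"
    unfolding \<rho> using p by (simp add: field_simps)
  finally show ?thesis using first by linarith
qed

lemma switch_part_nonpos:
  assumes N1: "1 \<le> N" and lam: "0 < lam" and p: "0 < p 2" "p 2 < p 1" and pk: "\<forall>k\<in>{2..K}. 0 \<le> p k \<and> p k \<le> p 2"
    and \<rho>: "\<rho> = p 2 / p 1"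
  shows "(\<Sum>k\<in>{2..K}. switch_rate N lam p s 1 k * (\<rho> - 1) + switch_rate N lam p s k 1 * (1 / \<rho> - 1)) \<le> 0"
proof (rule sum_nonpos)
  fix k assume k: "k \<in> {2..K}"
  have r0: "0 < \<rho>" "\<rho> < 1" using \<rho> p by auto
  define w where "w = real (s k) * lam * real (s 1) / real N"
  have "0 \<le> w" using lam by (simp add: w_def)
  have "switch_rate N lam p s 1 k * (\<rho> - 1) + switch_rate N lam p s k 1 * (1 / \<rho> - 1)
      = w * (p 1 * (\<rho> - 1) + p k * (1 / \<rho> - 1))"
    using r0 N1 by (simp add: switch_rate_def w_def field_simps)
  also have "\<dots> \<le> w * (p 1 * (\<rho> - 1) + p 2 * (1 / \<rho> - 1))"
    using pk k r0 \<open>0 \<le> w\<close> by (intro mult_left_mono add_left_mono mult_right_mono) (auto simp: field_simps)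
  also have "p 2 * (1 / \<rho> - 1) = p 1 * (1 - \<rho>)" unfolding \<rho> using p by (simp add: field_simps)
  also have "w * (p 1 * (\<rho> - 1) + p 1 * (1 - \<rho>)) = 0" by (simp add: algebra_simps)
  finally show "switch_rate N lam p s 1 k * (\<rho> - 1) + switch_rate N lam p s k 1 * (1 / \<rho> - 1) \<le> 0" .
qed

lemma drift_geom_potential_nonpos:
  assumes "2 \<le> K" "1 \<le> N" "0 < lam" "0 < mu" "mu \<le> 1"
    and "0 < p 2" "p 2 < p 1" "\<forall>k\<in>{2..K}. 0 \<le> p k \<and> p k \<le> p 2"
    and "s \<in> states K N"
    and \<rho>: "\<rho> = p 2 / p 1" and m: "m = mu / real K" and \<beta>: "\<beta> = \<rho> / (\<rho> + m * (1 - \<rho>))"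
  shows "drift K N lam mu p (geom_potential \<rho> \<beta>) s \<le> 0"
proof -
  have "0 < \<rho>" "\<rho> < 1" using \<rho> assms(6,7) by auto
  moreover have "0 < m" using m assms(1,4) by simp
  ultimately have "0 < \<beta>" unfolding \<beta> by (simp add: add_pos_nonneg)
  then have "0 \<le> geom_potential \<rho> \<beta> s" using \<open>0 < \<rho>\<close> by (simp add: geom_potential_def)
  moreover have "adopt_rate K N lam mu p s 1 * (\<rho> / \<beta> - 1)
      + (\<Sum>k\<in>{2..K}. adopt_rate K N lam mu p s k * (1 / \<beta> - 1))
      + (\<Sum>k\<in>{2..K}. switch_rate N lam p s 1 k * (\<rho> - 1) + switch_rate N lam p s k 1 * (1 / \<rho> - 1)) \<le> 0"
    using adopt_part_nonpos[OF assms] switch_part_nonpos[OF assms(2,3,6,7,8) \<rho>, where s=s]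
    by linarith
  ultimately show ?thesis
    using drift_geom_potential[of K \<rho> \<beta>] assms(1) \<open>0 < \<rho>\<close> \<open>0 < \<beta>\<close>
    by (simp add: mult_nonneg_nonpos)
qed


lemma drift_arm1_count:
  assumes "1 \<le> K"
  shows "drift K N lam mu p (\<lambda>s. real (s 1)) s
    = adopt_rate K N lam mu p s 1 + (\<Sum>k\<in>{2..K}. switch_rate N lam p s 1 k - switch_rate N lam p s k 1)"
proof -
  let ?V = "\<lambda>s. real (s 1)"
  let ?A = "adopt_rate K N lam mu p s" and ?B = "switch_rate N lam p s"
  have "(\<Sum>k\<in>{1..K}. ?A k * (?V (mv s 0 k) - ?V s)) = (\<Sum>k\<in>{1..K}. if k = 1 then ?A k else 0)"
    by (intro sum.cong refl) (cases "s 0"; auto simp: adopt_rate_def mv_def)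
  also have "\<dots> = ?A 1" using \<open>1 \<le> K\<close> by simp
  finally have adopt: "(\<Sum>k\<in>{1..K}. ?A k * (?V (mv s 0 k) - ?V s)) = ?A 1" .
  have "(\<Sum>k\<in>{1..K}. \<Sum>k'\<in>{1..K} - {k}. ?B k k' * (?V (mv s k' k) - ?V s))
      = (\<Sum>k\<in>{1..K}. \<Sum>k'\<in>{1..K} - {k}. ?B k k' * (if k = 1 then 1 else if k' = 1 then -1 else 0))"
    by (intro sum.cong refl) (cases "s 1"; auto simp: switch_rate_def mv_def)
  also have "\<dots> = (\<Sum>k\<in>{2..K}. ?B 1 k - ?B k 1)"
    by (subst sum_offdiag_via_1[OF \<open>1 \<le> K\<close>]) auto
  finally have switch: "(\<Sum>k\<in>{1..K}. \<Sum>k'\<in>{1..K} - {k}. ?B k k' * (?V (mv s k' k) - ?V s))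
      = (\<Sum>k\<in>{2..K}. ?B 1 k - ?B k 1)" .
  show ?thesis unfolding drift_def adopt switch ..
qed

lemma drift_arm1_count_ge:
  assumes K2: "2 \<le> K" and N1: "1 \<le> N" and lam: "0 < lam" and mu: "0 < mu" "mu \<le> 1"
    and p: "0 < p 1" "p 2 < p 1" and pk: "\<forall>k\<in>{2..K}. 0 \<le> p k \<and> p k \<le> p 2"
    and s: "s \<in> states K N"
  shows "0 \<le> drift K N lam mu p (\<lambda>s. real (s 1)) s"
    and "s \<noteq> target N \<Longrightarrow> 1 \<le> s 0 \<or> 1 \<le> s 1 \<Longrightarrow>
      lam * min (mu / real K * p 1) ((p 1 - p 2) / real N) \<le> drift K N lam mu p (\<lambda>s. real (s 1)) s"
proof -
  let ?A = "adopt_rate K N lam mu p s" and ?B = "switch_rate N lam p s"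
  let ?S2 = "\<Sum>k\<in>{2..K}. real (s k)"
  have drift: "drift K N lam mu p (\<lambda>s. real (s 1)) s = ?A 1 + (\<Sum>k\<in>{2..K}. ?B 1 k - ?B k 1)"
    using K2 by (intro drift_arm1_count) simp
  have adopt: "real (s 0) * lam * (mu / real K) * p 1 \<le> ?A 1"
    unfolding adopt_rate_def using lam p mu N1
    by (intro mult_right_mono mult_left_mono) (auto simp: add_increasing2)
  have "(\<Sum>k\<in>{2..K}. lam * (p 1 - p 2) / real N * (real (s 1) * real (s k)))
      \<le> (\<Sum>k\<in>{2..K}. ?B 1 k - ?B k 1)"
  proof (rule sum_mono)
    fix k assume k: "k \<in> {2..K}"
    define w where "w = real (s k) * lam * real (s 1) / real N"
    have "0 \<le> w" using lam by (simp add: w_def)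
    have "lam * (p 1 - p 2) / real N * (real (s 1) * real (s k)) = w * (p 1 - p 2)"
      by (simp add: w_def)
    also have "\<dots> \<le> w * (p 1 - p k)" using pk k \<open>0 \<le> w\<close> by (intro mult_left_mono) auto
    also have "\<dots> = ?B 1 k - ?B k 1" using N1 by (simp add: switch_rate_def w_def field_simps)
    finally show "lam * (p 1 - p 2) / real N * (real (s 1) * real (s k)) \<le> ?B 1 k - ?B k 1" .
  qed
  then have switch: "lam * (p 1 - p 2) / real N * (real (s 1) * ?S2) \<le> (\<Sum>k\<in>{2..K}. ?B 1 k - ?B k 1)"
    by (simp add: sum_distrib_left)
  have "0 \<le> real (s 0) * lam * (mu / real K) * p 1" using lam mu p by simp
  moreover have "0 \<le> lam * (p 1 - p 2) / real N * (real (s 1) * ?S2)"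
    using lam p by (intro mult_nonneg_nonneg sum_nonneg) auto
  ultimately show "0 \<le> drift K N lam mu p (\<lambda>s. real (s 1)) s"
    using drift adopt switch by linarith
  let ?\<epsilon> = "lam * min (mu / real K * p 1) ((p 1 - p 2) / real N)"
  assume "s \<noteq> target N" "1 \<le> s 0 \<or> 1 \<le> s 1"
  then consider "1 \<le> s 0" | "s 0 = 0" "1 \<le> s 1" "\<exists>k\<in>{2..K}. 1 \<le> s k"
  proof (cases "s 0 = 0")
    case True
    have "\<exists>k\<in>{2..K}. s k \<noteq> 0"
      using states_eq_target[OF s _ True] K2 \<open>s \<noteq> target N\<close> by force
    then obtain k where "k \<in> {2..K}" "1 \<le> s k" by (auto simp: Suc_le_eq)
    moreover have "1 \<le> s 1" using True \<open>1 \<le> s 0 \<or> 1 \<le> s 1\<close> by simp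
    ultimately show ?thesis using that(2) True by blast
  qed (use that in simp)
  then show "?\<epsilon> \<le> drift K N lam mu p (\<lambda>s. real (s 1)) s"
  proof cases
    case 1
    have "?\<epsilon> \<le> lam * (mu / real K * p 1)" using lam by (intro mult_left_mono) auto
    also have "\<dots> \<le> real (s 0) * (lam * (mu / real K * p 1))"
      using mult_right_mono[of 1 "real (s 0)" "lam * (mu / real K * p 1)"] 1 lam mu p by simp
    also have "\<dots> = real (s 0) * lam * (mu / real K) * p 1" by (simp add: mult_ac)
    finally show ?thesis
      using drift adopt switch \<open>0 \<le> lam * (p 1 - p 2) / real N * (real (s 1) * ?S2)\<close> by linarith
  next
    case 2
    then obtain k where k: "k \<in> {2..K}" "1 \<le> s k" by blast
    have "real (s k) \<le> ?S2" using k by (intro member_le_sum) auto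
    moreover have "1 \<le> real (s k)" "1 \<le> real (s 1)" using 2 k by simp_all
    ultimately have "1 * 1 \<le> real (s 1) * ?S2" by (intro mult_mono) auto
    then have "1 \<le> real (s 1) * ?S2" by simp
    have "?\<epsilon> \<le> lam * ((p 1 - p 2) / real N)" using lam by (intro mult_left_mono) auto
    also have "\<dots> \<le> lam * ((p 1 - p 2) / real N) * (real (s 1) * ?S2)"
      using mult_left_mono[of 1 _ "lam * ((p 1 - p 2) / real N)"] \<open>1 \<le> real (s 1) * ?S2\<close> lam p
      by simp
    also have "\<dots> = lam * (p 1 - p 2) / real N * (real (s 1) * ?S2)" by simp
    finally show ?thesis
      using drift adopt switch \<open>0 \<le> real (s 0) * lam * (mu / real K) * p 1\<close> by linarith
  qed
qed


section \<open>The success probability\<close>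

text \<open>Young's inequality gives r powr \<alpha> \<le> 1 + \<alpha> (r - 1) for r > 1.\<close>
lemma beta_pow_le_powr:
  assumes "2 \<le> K" "0 < mu" "mu \<le> 1" "0 < \<delta>" "\<delta> \<le> 1" and p: "0 < p 2" "p 2 < p 1" "p 1 \<le> 1"
  shows "((p 2 / p 1) / ((p 2 / p 1) + mu / real K * (1 - p 2 / p 1))) ^ N
    \<le> (p 1 / p 2) powr (- (1 - \<delta>) * (mu * p 1 / (real K * exp 1)) * real N)"
proof -
  define r where "r = p 1 / p 2"
  define m where "m = mu / real K"
  define \<alpha> where "\<alpha> = (1 - \<delta>) * (mu * p 1 / (real K * exp 1))"
  have "1 < r" using p by (simp add: r_def)
  have "0 < m" "m \<le> 1" using assms(1-3) by (simp_all add: m_def divide_le_eq_1)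
  have "0 \<le> \<alpha>" unfolding \<alpha>_def using assms by simp
  have "(1 - \<delta>) * p 1 \<le> exp 1"
    using assms(4,5) p mult_mono[of "1 - \<delta>" 1 "p 1" 1] exp_ge_add_one_self[of 1] by simp
  then have "(1 - \<delta>) * p 1 / exp 1 \<le> 1" by simp
  then have "\<alpha> \<le> m"
    using mult_right_mono[of "(1 - \<delta>) * p 1 / exp 1" 1 m] \<open>0 < m\<close>
    unfolding \<alpha>_def m_def by (simp add: field_simps)
  have "r powr \<alpha> * 1 powr (1 - \<alpha>) \<le> \<alpha> * r + (1 - \<alpha>) * 1"
    by (rule Youngs_inequality_0) (use \<open>0 \<le> \<alpha>\<close> \<open>\<alpha> \<le> m\<close> \<open>m \<le> 1\<close> \<open>1 < r\<close> in auto)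
  then have "r powr \<alpha> \<le> 1 + \<alpha> * (r - 1)" by (simp add: algebra_simps)
  also have "\<dots> \<le> 1 + m * (r - 1)" using \<open>\<alpha> \<le> m\<close> \<open>1 < r\<close> by (intro add_left_mono mult_right_mono) auto
  finally have Young: "r powr \<alpha> \<le> 1 + m * (r - 1)" .
  have "((p 2 / p 1) / ((p 2 / p 1) + m * (1 - p 2 / p 1))) ^ N = 1 / (1 + m * (r - 1)) ^ N"
    using p unfolding r_def by (simp add: field_simps power_one_over)
  also have "\<dots> \<le> 1 / (r powr \<alpha>) ^ N"
  proof -
    have "0 < 1 + m * (r - 1)" using mult_pos_pos[of m "r - 1"] \<open>1 < r\<close> \<open>0 < m\<close> by linarith
    then show ?thesis using Young \<open>1 < r\<close>
      by (intro divide_left_mono power_mono mult_pos_pos zero_less_power) auto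
  qed
  also have "\<dots> = r powr (- (\<alpha> * real N))"
    using \<open>1 < r\<close> by (simp add: powr_minus powr_powr[symmetric] powr_realpow divide_inverse)
  also have "- (\<alpha> * real N) = - (1 - \<delta>) * (mu * p 1 / (real K * exp 1)) * real N"
    unfolding \<alpha>_def using assms(1) by (simp add: field_simps)
  finally show ?thesis unfolding r_def m_def .
qed

lemma gen_target_eq_0: "1 \<le> K \<Longrightarrow> gen K N lam mu p (target N) u = 0"
  unfolding gen_def rate_def target_def by (simp add: sum.neutral)

lemma decreasing_arms_bounds:
  fixes p :: "nat \<Rightarrow> real"
  assumes dec: "\<forall>k\<in>{2..<K}. p (Suc k) \<le> p k" and "0 \<le> p K"
  shows "\<forall>k\<in>{2..K}. 0 \<le> p k \<and> p k \<le> p 2"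
proof
  fix k assume "k \<in> {2..K}"
  then have "2 \<le> k" "k \<le> K" by auto
  have "p K \<le> p k"
    using \<open>k \<le> K\<close>
  proof (induction k rule: inc_induct)
    case (step n)
    have "p (Suc n) \<le> p n" using dec step.hyps \<open>2 \<le> k\<close> by auto
    then show ?case using step.IH by linarith
  qed simp
  moreover have "p k \<le> p 2"
    using \<open>2 \<le> k\<close>
  proof (induction k rule: dec_induct)
    case (step n)
    have "p (Suc n) \<le> p n" using dec step.hyps \<open>k \<le> K\<close> by auto
    then show ?case using step.IH by linarith
  qed simp
  ultimately show "0 \<le> p k \<and> p k \<le> p 2" using \<open>0 \<le> p K\<close> by simp
qed


lemma learning_chain_success_ge:
  assumes K2: "2 \<le> K" and N1: "1 \<le> N" and lam: "0 < lam" and mu: "0 < mu" "mu \<le> 1"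
    and p: "0 < p 2" "p 2 < p 1" and pk: "\<forall>k\<in>{2..K}. 0 \<le> p k \<and> p k \<le> p 2"
    and chain: "is_learning_chain K N lam mu p M X" and "0 < \<eta>"
  shows "1 - ((p 2 / p 1) / ((p 2 / p 1) + mu / real K * (1 - p 2 / p 1))) ^ N - \<eta>
      \<le> measure M {\<omega>\<in>space M. \<forall>\<^sub>F t in at_top. X t \<omega> = target N}"
proof -
  let ?S = "states K N" and ?Q = "gen K N lam mu p" and ?x0 = "\<lambda>i. if i = 0 then N else 0"
  define \<rho> where "\<rho> = p 2 / p 1"
  define \<beta> where "\<beta> = \<rho> / (\<rho> + mu / real K * (1 - \<rho>))"
  define W where "W = {u. u \<noteq> target N \<and> (1 \<le> u 0 \<or> 1 \<le> u 1)}"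
  let ?G = "geom_potential \<rho> \<beta>" and ?V = "\<lambda>s. real (s 1)"
  let ?\<epsilon> = "lam * min (mu / real K * p 1) ((p 1 - p 2) / real N)"
  have "1 \<le> K" using K2 by simp
  interpret finite_ctmc M ?S ?Q ?x0 X
    using chain finite_states unfolding is_learning_chain_def
    by unfold_locales (auto simp: states_def)
  have "0 < \<rho>" "\<rho> < 1" using p by (simp_all add: \<rho>_def)
  then have "0 < \<beta>" unfolding \<beta>_def using mu by (simp add: add_pos_nonneg)
  have "1 - ?G ?x0 - \<eta> \<le> prob {\<omega>\<in>space M. \<forall>\<^sub>F t in at_top. X t \<omega> = target N}"
  proof (rule prob_eventually_absorbed_ge_superharmonic)
    show "target N \<in> ?S" using \<open>1 \<le> K\<close> by (rule target_in_states)
    show "?Q (target N) u = 0" for u using \<open>1 \<le> K\<close> by (rule gen_target_eq_0)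
    show "\<forall>u\<in>?S. 0 \<le> ?G u" using \<open>0 < \<rho>\<close> \<open>0 < \<beta>\<close> by (simp add: geom_potential_def)
    show "\<forall>v\<in>?S. gen_apply ?S ?Q ?G v \<le> 0"
      using drift_geom_potential_nonpos[OF K2 N1 lam mu p pk _ \<rho>_def refl \<beta>_def]
      by (simp add: gen_apply_eq_drift)
    show "\<forall>u\<in>?S - W - {target N}. 1 \<le> ?G u"
    proof
      fix u assume "u \<in> ?S - W - {target N}"
      then have "u 0 = 0" "u 1 = 0" unfolding W_def by auto
      then show "1 \<le> ?G u" by (simp add: geom_potential_def)
    qed
    show "\<forall>u\<in>?S. 0 \<le> ?V u \<and> ?V u \<le> real N" using state_le_N K2 by simp
    show "\<forall>v\<in>?S. 0 \<le> gen_apply ?S ?Q ?V v"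
      using drift_arm1_count_ge(1)[OF K2 N1 lam mu _ p(2) pk] p by (simp add: gen_apply_eq_drift)
    show "\<forall>v\<in>?S \<inter> W. ?\<epsilon> \<le> gen_apply ?S ?Q ?V v"
      using drift_arm1_count_ge(2)[OF K2 N1 lam mu _ p(2) pk] p by (simp add: gen_apply_eq_drift W_def)
    show "0 < ?\<epsilon>" using lam mu K2 p N1 by simp
  qed fact
  moreover have "?G ?x0 = \<beta> ^ N" by (simp add: geom_potential_def)
  ultimately show ?thesis unfolding \<beta>_def \<rho>_def by simp
qed

theorem theorem1:
  fixes K N :: nat and lam mu \<delta> :: real and p :: "nat \<Rightarrow> real"
    and M :: "'a measure" and X :: "real \<Rightarrow> 'a \<Rightarrow> (nat \<Rightarrow> nat)"
  assumes "K \<ge> 2" and "N \<ge> 1" and "lam > 0"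
    and "0 < mu" "mu \<le> 1" and "0 < \<delta>" "\<delta> \<le> 1"
    and "p 1 \<le> 1" "p 1 > p 2" "\<forall>k\<in>{2..<K}. p k \<ge> p (Suc k)" "p K \<ge> 0"
    and "0 < p 1" and "p 2 \<noteq> 0"
    and "is_learning_chain K N lam mu p M X"
  shows "measure M {\<omega>\<in>space M. \<forall>\<^sub>F t in at_top. X t \<omega> = target N}
     \<ge> 1 - (p 1 / p 2) powr (- (1 - \<delta>) * (mu * p 1 / (real K * exp 1)) * real N)
         - exp (- (mu * p 1 / (real K * exp 1)) * (\<delta>\<^sup>2 / 2) * real N)"
proof -
  have arms: "\<forall>k\<in>{2..K}. 0 \<le> p k \<and> p k \<le> p 2"
    using decreasing_arms_bounds assms(10,11) by blast
  with assms(1,13) have "0 < p 2" by force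
  note success = learning_chain_success_ge[OF assms(1-5) \<open>0 < p 2\<close> assms(9) arms assms(14)
      exp_gt_zero[of "- (mu * p 1 / (real K * exp 1)) * (\<delta>\<^sup>2 / 2) * real N"]]
  show ?thesis
    using success beta_pow_le_powr[OF assms(1,4-7) \<open>0 < p 2\<close> assms(9,8), of N] by linarith
qed

end
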